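(* Let $A=\{p_1,\ldots,p_n\}$ be a pseudo-instance of the Pinwheel Scheduling problem (a finite multiset of positive real periods) with $p_i\ge 2$ for all $i$ and density $\rho(A)=\sum_i 1/p_i\le 7/12$. Apply to $A$ the algorithm of Chan and Chin described in the context (specialization with respect to $\{2,3\}$ followed by normalization), producing multisets $B'$ and $C'$ of positive integers. Then the Pinwheel Scheduling instance $B'\cup C'$ is schedulable.
   Context: Pinwheel Scheduling (PS): an instance is a finite multiset of positive integer periods $q_1,\ldots,q_n$ (one per job). A schedule assigns at most one job to each day $1,2,3,\ldots$ (perpetually); it is feasible if every job $i$ is scheduled at least once in every window of $q_i$ consecutive days. The instance is schedulable if a feasible schedule exists. A pseudo-instance is a multiset of positive reals $p_i$; its density is $\rho(A)=\sum_i 1/p_i$, and the density of any multiset $X$ of periods is $\rho(X)=\sum_{p\in X}1/p$ (with $\rho(\emptyset)=0$). Specialization: specializing a multiset of periods with respect to $\{x\}$ ($x$ a positive integer) means rounding each period down to the largest element of $\{x2^j: j\ge 0 \text{ integer}\}$ not exceeding it. The algorithm: split $A=A_2\cup A_3$, where $A_2=\{p_i: 2\cdot 2^j\le p_i<3\cdot 2^j \text{ for some integer } j\ge 0\}$ and $A_3=\{p_i: 3\cdot 2^j\le p_i<2\cdot 2^{j+1}\text{ for some integer } j\ge 0\}$. Let $B$ be the specialization of $A_2$ with respect to $\{2\}$ and $C$ the specialization of $A_3$ with respect to $\{3\}$. Let $r=\lfloor 2\rho(B)\rfloor$ and $s=\lfloor 3\rho(C)\rfloor$, and choose sub-multisets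 $P\subseteq B$, $Q\subseteq C$ with $\rho(B\setminus P)=r/2$ and $\rho(C\setminus Q)=s/3$, so that $\rho(B)=r/2+\rho(P)$ with $0\le\rho(P)<1/2$ and $\rho(C)=s/3+\rho(Q)$ with $0\le \rho(Q)<1/3$. If $\rho(P)+\rho(Q)=0$, set $B'=B$, $C'=C$. Otherwise apply normalization: (a) if $\tfrac43\rho(P)+\rho(Q)\le \tfrac13$: specialize $P$ with respect to $\{3\}$ and move it from $B$ to $C$; (b) if $\tfrac13<\tfrac43\rho(P)+\rho(Q)\le\tfrac23$ and $\rho(P)+\tfrac32\rho(Q)\le\tfrac12$: specialize $Q$ with respect to $\{2\}$ and move it from $C$ to $B$; (c) if $\tfrac13<\tfrac43\rho(P)+\rho(Q)\le\tfrac23$ and $\rho(P)+\tfrac32\rho(Q)>\tfrac12$: specialize $P$ with respect to $\{3\}$ and move it from $B$ to $C$; (d) if $\tfrac43\rho(P)+\rho(Q)>\tfrac23$: make no change. $B'$ and $C'$ denote $B$ and $C$ after normalization. *)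

theory Defs
  imports Complex_Main "HOL-Library.Multiset"
begin

definition dens :: "nat multiset \<Rightarrow> real" where
  "dens X = (\<Sum>p\<in>#X. 1 / real p)"

definition pdens :: "real multiset \<Rightarrow> real" where
  "pdens X = (\<Sum>p\<in>#X. 1 / p)"

text \<open>A schedule for the jobs listed in xs (job i has period xs!i) is a map from
  days to at most one job; it is feasible if every job i occurs in every window of
  xs!i consecutive days (days are 1,2,3,...).\<close>
definition feasible_schedule :: "nat list \<Rightarrow> (nat \<Rightarrow> nat option) \<Rightarrow> bool" where
  "feasible_schedule xs s \<longleftrightarrow>
     (\<forall>i < length xs. \<forall>t \<ge> 1. \<exists>d \<in> {t..<t + xs ! i}. s d = Some i)"

definition schedulable :: "nat multiset \<Rightarrow> bool" where
  "schedulable M \<longleftrightarrow> (\<exists>xs s. mset xs = M \<and> feasible_schedule xs s)"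

definition spec :: "nat \<Rightarrow> real \<Rightarrow> nat" where
  "spec x p = (GREATEST q. (\<exists>j::nat. q = x * 2 ^ j) \<and> real q \<le> p)"

definition in_A2 :: "real \<Rightarrow> bool" where
  "in_A2 p \<longleftrightarrow> (\<exists>j::nat. 2 * 2 ^ j \<le> p \<and> p < 3 * 2 ^ j)"

definition in_A3 :: "real \<Rightarrow> bool" where
  "in_A3 p \<longleftrightarrow> (\<exists>j::nat. 3 * 2 ^ j \<le> p \<and> p < 2 * 2 ^ (j + 1))"

definition cc_B :: "real multiset \<Rightarrow> nat multiset" where
  "cc_B A = image_mset (spec 2) (filter_mset in_A2 A)"

definition cc_C :: "real multiset \<Rightarrow> nat multiset" where
  "cc_C A = image_mset (spec 3) (filter_mset in_A3 A)"

definition cc_choice :: "real multiset \<Rightarrow> nat multiset \<Rightarrow> nat multiset \<Rightarrow> bool" where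
  "cc_choice A P Q \<longleftrightarrow>
     P \<subseteq># cc_B A \<and> Q \<subseteq># cc_C A \<and>
     dens (cc_B A - P) = real_of_int \<lfloor>2 * dens (cc_B A)\<rfloor> / 2 \<and>
     dens (cc_C A - Q) = real_of_int \<lfloor>3 * dens (cc_C A)\<rfloor> / 3"

definition cc_normalize :: "nat multiset \<Rightarrow> nat multiset \<Rightarrow> nat multiset \<Rightarrow> nat multiset
    \<Rightarrow> nat multiset \<times> nat multiset" where
  "cc_normalize B C P Q =
     (if dens P + dens Q = 0 then (B, C)
      else if 4/3 * dens P + dens Q \<le> 1/3
        then (B - P, C + image_mset (\<lambda>p. spec 3 (real p)) P)
      else if 4/3 * dens P + dens Q \<le> 2/3 \<and> dens P + 3/2 * dens Q \<le> 1/2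
        then (B + image_mset (\<lambda>p. spec 2 (real p)) Q, C - Q)
      else if 4/3 * dens P + dens Q \<le> 2/3
        then (B - P, C + image_mset (\<lambda>p. spec 3 (real p)) P)
      else (B, C))"

definition cc_output :: "real multiset \<Rightarrow> nat multiset \<Rightarrow> nat multiset \<Rightarrow> nat multiset \<times> nat multiset" where
  "cc_output A P Q = cc_normalize (cc_B A) (cc_C A) P Q"

end

(* If all periods have the form m * 2^j, the smaller of any two divides the larger, and density
   at most 1 suffices for schedulability: in order of increasing period q, give each job a residue
   class modulo q disjoint from the classes already in use; the earlier periods divide q, so they
   occupy at most q times their density, i.e. fewer than q, of the residues modulo q.

   Specialization raises densities by a factor of at most 3/2 on A2 and 4/3 on A3, hence
   2/3 rho(B) + 3/4 rho(C) <= rho(A) <= 7/12.  Rounding the periods 3 * 2^j down to 2 * 2^j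
   shows that B + C is schedulable once rho(B) + 3/2 rho(C) <= 1.  Moving Q to B leaves this
   weighted density unchanged and moving P to C raises it by rho(P).  With rho(B) = r/2 + rho(P)
   and rho(C) = s/3 + rho(Q) the density bound reads 4r + 3s + 8 rho(P) + 9 rho(Q) <= 7, and the
   integrality of r and s yields the needed bound in every branch of the normalization; in the
   branches that move P while r = 0, B' is empty and C' alone has density at most 1. *)

theory Submission
  imports Defs
begin

lemma dens_add_mset [simp]: "dens (add_mset a M) = 1 / real a + dens M"
  by (simp add: dens_def)

lemma dens_empty [simp]: "dens {#} = 0"
  by (simp add: dens_def)

lemma dens_union [simp]: "dens (M + N) = dens M + dens N"
  by (simp add: dens_def)

lemma dens_nonneg: "0 \<le> dens M"
  by (induction M) auto

lemma dens_diff: "N \<subseteq># M \<Longrightarrow> dens (M - N) = dens M - dens N"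
  by (metis add_diff_cancel_right' dens_union subset_mset.diff_add)

lemma dens_ge_member: "x \<in># M \<Longrightarrow> 1 / real x \<le> dens M"
  by (metis dens_add_mset dens_nonneg le_add_same_cancel1 multi_member_split)

lemma dens_mult_eq_sum_div:
  assumes "\<forall>p\<in>set xs. p dvd q"
  shows "real q * dens (mset xs) = real (\<Sum>p\<leftarrow>xs. q div p)"
  using assms by (induction xs) (auto simp: real_of_nat_div algebra_simps)

lemma pdens_add_mset [simp]: "pdens (add_mset a M) = 1 / a + pdens M"
  by (simp add: pdens_def)

section \<open>Harmonic instances\<close>

lemma feasible_schedule_mono:
  assumes "list_all2 (\<le>) ys xs" and "feasible_schedule ys s"
  shows "feasible_schedule xs s"
  unfolding feasible_schedule_def
proof (intro allI impI)
  fix i t :: nat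
  assume "i < length xs" and "1 \<le> t"
  moreover have "length ys = length xs" and "ys ! i \<le> xs ! i"
    using assms(1) \<open>i < length xs\<close> by (auto simp: list_all2_conv_all_nth)
  ultimately obtain d where "d \<in> {t..<t + ys ! i}" and "s d = Some i"
    using assms(2) unfolding feasible_schedule_def by metis
  then show "\<exists>d\<in>{t..<t + xs ! i}. s d = Some i"
    using \<open>ys ! i \<le> xs ! i\<close> by auto
qed

lemma schedulable_image_mono:
  assumes "\<forall>x\<in>#M. f x \<le> x" and "schedulable (image_mset f M)"
  shows "schedulable M"
proof -
  obtain xs s where xs: "mset xs = image_mset f M" and s: "feasible_schedule xs s"
    using assms(2) unfolding schedulable_def by blast
  obtain L where L: "mset L = M"
    using ex_mset by blast
  have "list_all2 (\<le>) (map f L) L"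
    using assms(1) L by (auto simp: list_all2_conv_all_nth)
  moreover have "mset xs = mset (map f L)"
    using xs L by simp
  ultimately obtain ys where "list_all2 (\<le>) xs ys" and "mset ys = M"
    using list_all2_reorder_left_invariance L by blast
  then show ?thesis
    using feasible_schedule_mono s unfolding schedulable_def by blast
qed

lemma residue_in_window:
  fixes p a t :: nat
  assumes "a < p"
  shows "\<exists>d\<in>{t..<t + p}. d mod p = a"
proof
  let ?d = "t + (a + p - t mod p) mod p"
  have "p > 0" using assms by simp
  then show "?d \<in> {t..<t + p}" by simp
  have "?d mod p = (t mod p + (a + p - t mod p)) mod p"
    by (simp add: mod_add_left_eq mod_add_right_eq)
  also have "\<dots> = (a + p) mod p"
    using mod_less_divisor[OF \<open>p > 0\<close>, of t] by simp
  finally show "?d mod p = a" using assms by simp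
qed

text \<open>A pair (p, a) stands for a job of period p run on the days congruent to a modulo p.\<close>

definition disjoint_residue_classes :: "nat \<times> nat \<Rightarrow> nat \<times> nat \<Rightarrow> bool" where
  "disjoint_residue_classes u v \<longleftrightarrow> (\<forall>t. t mod fst u = snd u \<longrightarrow> t mod fst v \<noteq> snd v)"

lemma disjoint_residue_classes_sym:
  "disjoint_residue_classes u v \<Longrightarrow> disjoint_residue_classes v u"
  unfolding disjoint_residue_classes_def by auto

lemma feasible_schedule_of_offsets:
  assumes "\<forall>(p, a)\<in>set ps. a < p" and "sorted_wrt disjoint_residue_classes ps"
  shows "\<exists>s. feasible_schedule (map fst ps) s"
proof -
  let ?hits = "\<lambda>d i. i < length ps \<and> d mod fst (ps ! i) = snd (ps ! i)"
  have unique: "i = k" if "?hits d i" and "?hits d k" for d i k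
  proof (rule ccontr)
    assume "i \<noteq> k"
    then have "disjoint_residue_classes (ps ! i) (ps ! k)"
      using assms(2) that disjoint_residue_classes_sym
      by (metis linorder_neqE_nat sorted_wrt_iff_nth_less)
    then show False
      using that unfolding disjoint_residue_classes_def by blast
  qed
  define s where "s d = (if \<exists>i. ?hits d i then Some (THE i. ?hits d i) else None)" for d
  have "feasible_schedule (map fst ps) s"
    unfolding feasible_schedule_def
  proof (intro allI impI)
    fix i t :: nat
    assume i: "i < length (map fst ps)"
    then have "snd (ps ! i) < fst (ps ! i)"
      using assms(1) by (metis case_prod_beta length_map nth_mem)
    then obtain d where d: "d \<in> {t..<t + fst (ps ! i)}" "d mod fst (ps ! i) = snd (ps ! i)"
      using residue_in_window by blast
    then have "?hits d i" using i by simp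
    then have "(THE i. ?hits d i) = i" using unique by blast
    then have "s d = Some i"
      using \<open>?hits d i\<close> unfolding s_def by auto
    then show "\<exists>d\<in>{t..<t + map fst ps ! i}. s d = Some i"
      using d i by auto
  qed
  then show ?thesis by blast
qed

lemma card_UN_list_le: "card (\<Union>x\<in>set xs. A x) \<le> (\<Sum>x\<leftarrow>xs. card (A x))"
  by (induction xs) (auto intro: order_trans[OF card_Un_le])

lemma card_residue_class_le:
  fixes p q c :: nat
  assumes "p dvd q"
  shows "card {t \<in> {0..<q}. t mod p = c} \<le> q div p"
proof -
  have "{t \<in> {0..<q}. t mod p = c} \<subseteq> (\<lambda>k. c + k * p) ` {0..<q div p}"
  proof
    fix t assume t: "t \<in> {t \<in> {0..<q}. t mod p = c}"
    then have "t = c + (t div p) * p"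
      by (metis (mono_tags) mem_Collect_eq mod_div_mult_eq add.commute)
    moreover have "t div p < q div p"
      using t assms by (auto intro: less_mult_imp_div_less)
    ultimately show "t \<in> (\<lambda>k. c + k * p) ` {0..<q div p}" by force
  qed
  then have "card {t \<in> {0..<q}. t mod p = c} \<le> card ((\<lambda>k. c + k * p) ` {0..<q div p})"
    by (intro card_mono) auto
  also have "\<dots> \<le> q div p"
    using card_image_le[of "{0..<q div p}"] by simp
  finally show ?thesis .
qed

lemma exists_free_residue:
  assumes "0 < q" and "\<forall>p\<in>set (map fst ps). p dvd q" and "dens (mset (map fst ps)) < 1"
  shows "\<exists>b<q. \<forall>u\<in>set ps. disjoint_residue_classes u (q, b)"
proof -
  define S where "S = (\<Union>u\<in>set ps. {t \<in> {0..<q}. t mod fst u = snd u})"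
  have "card S \<le> (\<Sum>u\<leftarrow>ps. card {t \<in> {0..<q}. t mod fst u = snd u})"
    unfolding S_def by (rule card_UN_list_le)
  also have "\<dots> \<le> (\<Sum>u\<leftarrow>ps. q div fst u)"
    using assms(2) by (intro sum_list_mono card_residue_class_le) simp
  also have "\<dots> = (\<Sum>p\<leftarrow>map fst ps. q div p)"
    by (simp add: comp_def)
  finally have "real (card S) \<le> real q * dens (mset (map fst ps))"
    using dens_mult_eq_sum_div[OF assms(2)] by linarith
  also have "\<dots> < real q"
    using assms(1,3) by simp
  finally have "\<not> {0..<q} \<subseteq> S"
    using card_mono[of S "{0..<q}"] by (force simp: S_def)
  then obtain b where b: "b < q" "b \<notin> S" by (auto simp: subset_iff)
  have "disjoint_residue_classes u (q, b)" if "u \<in> set ps" for u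
    unfolding disjoint_residue_classes_def
  proof (intro allI impI notI)
    fix t assume t: "t mod fst u = snd u" "t mod fst (q, b) = snd (q, b)"
    have "fst u dvd q" using assms(2) that by simp
    then have "b mod fst u = snd u" using t by (metis fst_conv snd_conv mod_mod_cancel)
    then show False using b that unfolding S_def by auto
  qed
  then show ?thesis using b(1) by blast
qed

lemma residue_offsets_exist:
  assumes "sorted_wrt (dvd) xs" and "0 \<notin> set xs" and "dens (mset xs) \<le> 1"
  shows "\<exists>ps. map fst ps = xs \<and> (\<forall>(p, a)\<in>set ps. a < p) \<and>
    sorted_wrt disjoint_residue_classes ps"
  using assms
proof (induction xs rule: rev_induct)
  case Nil
  show ?case by simp
next
  case (snoc q xs)
  have "0 < q" using snoc.prems(2) by auto
  then have "dens (mset xs) < dens (mset (xs @ [q]))" by simp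
  then have "dens (mset xs) < 1" using snoc.prems(3) by linarith
  moreover have chain: "sorted_wrt (dvd) xs" "\<forall>p\<in>set xs. p dvd q"
    using snoc.prems(1) by (auto simp: sorted_wrt_append)
  ultimately obtain ps where ps: "map fst ps = xs" "\<forall>(p, a)\<in>set ps. a < p"
    "sorted_wrt disjoint_residue_classes ps"
    using snoc.IH snoc.prems(2) by fastforce
  obtain b where "b < q" "\<forall>u\<in>set ps. disjoint_residue_classes u (q, b)"
    using exists_free_residue[of q ps] \<open>0 < q\<close> chain(2) \<open>dens (mset xs) < 1\<close> ps(1) by blast
  then show ?case
    using ps by (intro exI[of _ "ps @ [(q, b)]"]) (auto simp: sorted_wrt_append)
qed

lemma pow2_multiples_le_imp_dvd:
  fixes m :: nat
  assumes "x \<in> range (\<lambda>j. m * 2 ^ j)" and "y \<in> range (\<lambda>j. m * 2 ^ j)" and "x \<le> y"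
  shows "x dvd y"
proof -
  obtain i j where x: "x = m * 2 ^ i" and y: "y = m * 2 ^ j"
    using assms(1,2) by blast
  show ?thesis
  proof (cases "m = 0")
    case True
    then show ?thesis using x y by simp
  next
    case False
    then have "(2::nat) ^ i \<le> 2 ^ j" using assms(3) x y by simp
    then have "i \<le> j" using power_le_imp_le_exp[of 2] by simp
    then show ?thesis using x y by (simp add: le_imp_power_dvd)
  qed
qed

lemma sorted_pow2_multiples_dvd_chain:
  fixes xs :: "nat list"
  assumes "sorted xs" and "set xs \<subseteq> range (\<lambda>j. m * 2 ^ j)"
  shows "sorted_wrt (dvd) xs"
  using assms(1)
proof (rule sorted_wrt_mono_rel[rotated])
  show "x dvd y" if "x \<in> set xs" "y \<in> set xs" "x \<le> y" for x y
    using that assms(2) by (intro pow2_multiples_le_imp_dvd) auto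
qed

lemma schedulable_pow2_multiples:
  fixes m :: nat
  assumes "0 < m" and "set_mset M \<subseteq> range (\<lambda>j. m * 2 ^ j)" and "dens M \<le> 1"
  shows "schedulable M"
proof -
  define xs where "xs = sorted_list_of_multiset M"
  have "sorted_wrt (dvd) xs"
    using sorted_pow2_multiples_dvd_chain[of xs m] assms(2) unfolding xs_def by simp
  moreover have "0 \<notin> set xs"
    using assms(1,2) unfolding xs_def by auto
  moreover have "dens (mset xs) \<le> 1"
    using assms(3) unfolding xs_def by simp
  ultimately obtain ps where "map fst ps = xs" "\<forall>(p, a)\<in>set ps. a < p"
    "sorted_wrt disjoint_residue_classes ps"
    using residue_offsets_exist by blast
  then obtain s where "feasible_schedule xs s"
    using feasible_schedule_of_offsets by blast
  then show ?thesis
    unfolding schedulable_def using mset_sorted_list_of_multiset[of M] xs_def by blast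
qed

lemma pow2_multiples_eq_empty:
  assumes "set_mset M \<subseteq> range (\<lambda>j. m * 2 ^ j)" and "0 < m" and "dens M = 0"
  shows "M = {#}"
proof (rule ccontr)
  assume "M \<noteq> {#}"
  then obtain x where "x \<in># M" by blast
  then have "0 < 1 / real x" and "1 / real x \<le> dens M"
    using assms(1,2) dens_ge_member by auto
  then show False using assms(3) by linarith
qed

lemma sub_mset_with_dens:
  fixes m k :: nat
  assumes "sorted_wrt (dvd) xs" and "0 \<notin> set xs" and "\<forall>p\<in>set xs. m dvd p" and "0 < m"
    and "real k / real m \<le> dens (mset xs)"
  shows "\<exists>N. N \<subseteq># mset xs \<and> dens N = real k / real m"
  using assms
proof (induction xs rule: rev_induct)
  case Nil
  then show ?case by (intro exI[of _ "{#}"]) (simp add: divide_le_0_iff)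
next
  case (snoc q xs)
  have chain: "sorted_wrt (dvd) xs" "\<forall>p\<in>set xs. p dvd q"
    using snoc.prems(1) by (auto simp: sorted_wrt_append)
  show ?case
  proof (cases "real k / real m \<le> dens (mset xs)")
    case True
    then obtain N where "N \<subseteq># mset xs" "dens N = real k / real m"
      using snoc chain(1) by auto
    moreover have "mset xs \<subseteq># mset (xs @ [q])" by simp
    ultimately show ?thesis using subset_mset.order_trans by blast
  next
    case False
    \<comment> \<open>Scaled by q, both dens (mset xs) and k / m are integers, and appending q raises the
      former by exactly 1, so it cannot jump over k / m.\<close>
    have "0 < q" and "m dvd q" using snoc.prems(2,3) by auto
    define c where "c = (\<Sum>p\<leftarrow>xs. q div p)"
    have c: "real q * dens (mset xs) = real c"
      unfolding c_def using dens_mult_eq_sum_div[OF chain(2)] .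
    have kq: "real q * (real k / real m) = real (k * (q div m))"
      using \<open>m dvd q\<close> by (simp add: real_of_nat_div)
    have less: "real q * dens (mset xs) < real q * (real k / real m)"
      using False \<open>0 < q\<close> by (intro mult_strict_left_mono) auto
    have "real q * (real k / real m) \<le> real q * (dens (mset xs) + 1 / real q)"
      using snoc.prems(5) by (intro mult_left_mono) auto
    also have "\<dots> = real q * dens (mset xs) + 1"
      using \<open>0 < q\<close> by (simp add: distrib_left)
    finally have "k * (q div m) = c + 1"
      using less unfolding c kq by linarith
    then have "real k / real m = dens (mset (xs @ [q]))"
      using c kq \<open>0 < q\<close> by (simp add: field_simps)
    then show ?thesis by (metis subset_mset.order_refl)
  qed
qed

lemma exists_sub_mset_floor_dens:
  fixes m :: nat
  assumes "0 < m" and "set_mset M \<subseteq> range (\<lambda>j. m * 2 ^ j)"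
  shows "\<exists>P. P \<subseteq># M \<and> dens (M - P) = real_of_int \<lfloor>real m * dens M\<rfloor> / real m"
proof -
  define xs where "xs = sorted_list_of_multiset M"
  define k where "k = nat \<lfloor>real m * dens M\<rfloor>"
  have k: "real k = real_of_int \<lfloor>real m * dens M\<rfloor>"
    unfolding k_def using dens_nonneg[of M] by simp
  have "real k / real m \<le> dens M"
    using k assms(1) by (simp add: field_simps)
  moreover have "sorted_wrt (dvd) xs" "0 \<notin> set xs" "\<forall>p\<in>set xs. m dvd p"
    using sorted_pow2_multiples_dvd_chain[of xs m] assms unfolding xs_def by auto
  ultimately obtain N where N: "N \<subseteq># M" "dens N = real k / real m"
    using sub_mset_with_dens[of xs m k] assms(1) unfolding xs_def by auto
  then have "M - (M - N) = N" by (simp add: subset_mset.diff_diff_right)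
  then show ?thesis
    using N k by (intro exI[of _ "M - N"]) auto
qed

section \<open>Specialization\<close>

lemma spec_eqI:
  fixes x j :: nat
  assumes "0 < x" and "real (x * 2 ^ j) \<le> p" and "p < real (x * 2 ^ (j + 1))"
  shows "spec x p = x * 2 ^ j"
  unfolding spec_def
proof (rule Greatest_equality)
  show "(\<exists>i. x * 2 ^ j = x * 2 ^ i) \<and> real (x * 2 ^ j) \<le> p"
    using assms(2) by blast
next
  fix y assume "(\<exists>i. y = x * 2 ^ i) \<and> real y \<le> p"
  then obtain i where y: "y = x * 2 ^ i" "real y \<le> p" by blast
  then have "x * 2 ^ i < x * 2 ^ (j + 1)"
    using assms(3) by (metis of_nat_less_iff order_le_less_trans)
  then have "i \<le> j"
    using power_less_imp_less_exp[of "2::nat" i "j + 1"] by simp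
  then show "y \<le> x * 2 ^ j"
    using y(1) by (simp add: power_increasing)
qed

lemma spec_2_of_2_pow [simp]: "spec 2 (2 * 2 ^ j) = 2 * 2 ^ j"
  by (rule spec_eqI) auto

lemma spec_2_of_3_pow [simp]: "spec 2 (3 * 2 ^ j) = 2 * 2 ^ j"
  by (rule spec_eqI) auto

lemma spec_3_of_4_pow [simp]: "spec 3 (4 * 2 ^ j) = 3 * 2 ^ j"
  by (rule spec_eqI) auto

lemma spec_2_in_A2:
  assumes "in_A2 p"
  shows "spec 2 p \<in> range (\<lambda>j. 2 * 2 ^ j)" and "1 / real (spec 2 p) \<le> 3 / 2 * (1 / p)"
proof -
  obtain j where j: "2 * 2 ^ j \<le> p" "p < 3 * 2 ^ j"
    using assms unfolding in_A2_def by blast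
  have spec: "spec 2 p = 2 * 2 ^ j"
    by (rule spec_eqI) (use j in auto)
  then show "spec 2 p \<in> range (\<lambda>j. 2 * 2 ^ j)" by blast
  have "0 < p" using j(1) by (simp add: less_le_trans[of 0 "2 * 2 ^ j"])
  then show "1 / real (spec 2 p) \<le> 3 / 2 * (1 / p)"
    using j(2) by (simp add: spec field_simps)
qed

lemma spec_3_in_A3:
  assumes "in_A3 p"
  shows "spec 3 p \<in> range (\<lambda>j. 3 * 2 ^ j)" and "1 / real (spec 3 p) \<le> 4 / 3 * (1 / p)"
proof -
  obtain j where j: "3 * 2 ^ j \<le> p" "p < 2 * 2 ^ (j + 1)"
    using assms unfolding in_A3_def by blast
  have spec: "spec 3 p = 3 * 2 ^ j"
    by (rule spec_eqI) (use j in auto)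
  then show "spec 3 p \<in> range (\<lambda>j. 3 * 2 ^ j)" by blast
  have "0 < p" using j(1) by (simp add: less_le_trans[of 0 "3 * 2 ^ j"])
  then show "1 / real (spec 3 p) \<le> 4 / 3 * (1 / p)"
    using j(2) by (simp add: spec field_simps)
qed

lemma not_in_A2_and_A3: "\<not> (in_A2 p \<and> in_A3 p)"
proof
  assume "in_A2 p \<and> in_A3 p"
  then obtain i j :: nat where i: "2 * 2 ^ i \<le> p" "p < 3 * 2 ^ i"
    and j: "3 * 2 ^ j \<le> p" "p < 2 * 2 ^ (j + 1)"
    unfolding in_A2_def in_A3_def by blast
  show False
  proof (cases "j < i")
    case True
    then have "(2::real) ^ (j + 1) \<le> 2 ^ i" by (intro power_increasing) auto
    then show False using i j by linarith
  next
    case False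
    then have "(2::real) ^ i \<le> 2 ^ j" by (intro power_increasing) auto
    then show False using i j by linarith
  qed
qed

lemma dens_image_spec_2_of_3_multiples:
  assumes "set_mset Q \<subseteq> range (\<lambda>j. 3 * 2 ^ j)"
  shows "set_mset (image_mset (\<lambda>p. spec 2 (real p)) Q) \<subseteq> range (\<lambda>j. 2 * 2 ^ j)"
    and "dens (image_mset (\<lambda>p. spec 2 (real p)) Q) = 3 / 2 * dens Q"
  using assms by (induction Q) auto

lemma dens_image_spec_3_of_4_multiples:
  assumes "set_mset P \<subseteq> range (\<lambda>j. 4 * 2 ^ j)"
  shows "set_mset (image_mset (\<lambda>p. spec 3 (real p)) P) \<subseteq> range (\<lambda>j. 3 * 2 ^ j)"
    and "dens (image_mset (\<lambda>p. spec 3 (real p)) P) = 4 / 3 * dens P"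
  using assms by (induction P) auto

lemma schedulable_pow2_multiples_2_3:
  assumes M: "set_mset M \<subseteq> range (\<lambda>j. 2 * 2 ^ j)"
    and N: "set_mset N \<subseteq> range (\<lambda>j. 3 * 2 ^ j)"
    and "dens M + 3 / 2 * dens N \<le> 1"
  shows "schedulable (M + N)"
proof (rule schedulable_image_mono)
  let ?f = "\<lambda>p. spec 2 (real p)"
  have "image_mset ?f M = M"
    using M by (induction M) auto
  then have "image_mset ?f (M + N) = M + image_mset ?f N" by simp
  then show "schedulable (image_mset ?f (M + N))"
    using schedulable_pow2_multiples[of 2] M assms(3) dens_image_spec_2_of_3_multiples[OF N]
    by auto
  show "\<forall>x\<in>#M + N. ?f x \<le> x"
    using M N by auto
qed

text \<open>The period 2 has no specialization with respect to {3} (spec 3 2 is a junk value).\<close>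

lemma pow2_multiples_2_without_2:
  assumes "set_mset P \<subseteq> range (\<lambda>j. 2 * 2 ^ j)" and "dens P < 1 / 2"
  shows "set_mset P \<subseteq> range (\<lambda>j. 4 * 2 ^ j)"
proof
  fix p assume "p \<in># P"
  moreover obtain j where j: "p = 2 * 2 ^ j"
    using assms(1) \<open>p \<in># P\<close> by blast
  ultimately have "j \<noteq> 0"
    using dens_ge_member[of p P] assms(2) by (intro notI) simp
  then show "p \<in> range (\<lambda>j. 4 * 2 ^ j)"
    using j by (auto simp: image_iff gr0_conv_Suc)
qed

lemma schedulable_move_3_to_2:
  assumes B: "set_mset B \<subseteq> range (\<lambda>j. 2 * 2 ^ j)"
    and C: "set_mset C \<subseteq> range (\<lambda>j. 3 * 2 ^ j)"
    and "Q \<subseteq># C" and "dens B + 3 / 2 * dens C \<le> 1"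
  shows "schedulable (B + image_mset (\<lambda>p. spec 2 (real p)) Q + (C - Q))"
proof (rule schedulable_pow2_multiples_2_3)
  have Q: "set_mset Q \<subseteq> range (\<lambda>j. 3 * 2 ^ j)"
    using C set_mset_mono[OF \<open>Q \<subseteq># C\<close>] by blast
  show "set_mset (B + image_mset (\<lambda>p. spec 2 (real p)) Q) \<subseteq> range (\<lambda>j. 2 * 2 ^ j)"
    using B dens_image_spec_2_of_3_multiples(1)[OF Q] by auto
  show "set_mset (C - Q) \<subseteq> range (\<lambda>j. 3 * 2 ^ j)"
    using C by (meson in_diffD subset_iff)
  show "dens (B + image_mset (\<lambda>p. spec 2 (real p)) Q) + 3 / 2 * dens (C - Q) \<le> 1"
    using assms(4) dens_image_spec_2_of_3_multiples(2)[OF Q] dens_diff[OF \<open>Q \<subseteq># C\<close>]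
    by (simp add: algebra_simps)
qed

lemma schedulable_move_2_to_3:
  assumes B: "set_mset B \<subseteq> range (\<lambda>j. 2 * 2 ^ j)"
    and C: "set_mset C \<subseteq> range (\<lambda>j. 3 * 2 ^ j)"
    and "P \<subseteq># B" and "dens P < 1 / 2"
    and "dens B + 3 / 2 * dens C + dens P \<le> 1 \<or>
      dens (B - P) = 0 \<and> dens C + 4 / 3 * dens P \<le> 1"
  shows "schedulable (B - P + (C + image_mset (\<lambda>p. spec 3 (real p)) P))"
proof -
  let ?SP = "image_mset (\<lambda>p. spec 3 (real p)) P"
  have "set_mset P \<subseteq> range (\<lambda>j. 4 * 2 ^ j)"
    using B set_mset_mono[OF \<open>P \<subseteq># B\<close>] assms(4) by (intro pow2_multiples_2_without_2) auto
  note SP = dens_image_spec_3_of_4_multiples[OF this]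
  have BP: "set_mset (B - P) \<subseteq> range (\<lambda>j. 2 * 2 ^ j)"
    using B by (meson in_diffD subset_iff)
  have CSP: "set_mset (C + ?SP) \<subseteq> range (\<lambda>j. 3 * 2 ^ j)"
    using C SP(1) by auto
  from assms(5) show ?thesis
  proof
    assume "dens B + 3 / 2 * dens C + dens P \<le> 1"
    then have "dens (B - P) + 3 / 2 * dens (C + ?SP) \<le> 1"
      using SP(2) dens_diff[OF \<open>P \<subseteq># B\<close>] by (simp add: algebra_simps)
    then show ?thesis
      using schedulable_pow2_multiples_2_3[OF BP CSP] by blast
  next
    assume "dens (B - P) = 0 \<and> dens C + 4 / 3 * dens P \<le> 1"
    then have "B - P = {#}" and "dens (C + ?SP) \<le> 1"
      using pow2_multiples_eq_empty[OF BP] SP(2) by auto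
    then show ?thesis
      using schedulable_pow2_multiples[OF _ CSP] by simp
  qed
qed

section \<open>The algorithm of Chan and Chin\<close>

lemma cc_B_pow2_multiples: "set_mset (cc_B A) \<subseteq> range (\<lambda>j. 2 * 2 ^ j)"
  unfolding cc_B_def using spec_2_in_A2(1) by auto

lemma cc_C_pow2_multiples: "set_mset (cc_C A) \<subseteq> range (\<lambda>j. 3 * 2 ^ j)"
  unfolding cc_C_def using spec_3_in_A3(1) by auto

lemma cc_choice_exists: "\<exists>P Q. cc_choice A P Q"
  using exists_sub_mset_floor_dens[of 2 "cc_B A"] exists_sub_mset_floor_dens[of 3 "cc_C A"]
    cc_B_pow2_multiples cc_C_pow2_multiples
  unfolding cc_choice_def by auto

lemma cc_dens_le_pdens:
  assumes "\<forall>p\<in>#A. 0 < p"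
  shows "2 / 3 * dens (cc_B A) + 3 / 4 * dens (cc_C A) \<le> pdens A"
  using assms
proof (induction A)
  case empty
  then show ?case by (simp add: cc_B_def cc_C_def pdens_def)
next
  case (add a A)
  then have IH: "2 / 3 * dens (cc_B A) + 3 / 4 * dens (cc_C A) \<le> pdens A" and "0 < a"
    by auto
  consider "in_A2 a" | "in_A3 a" | "\<not> in_A2 a" "\<not> in_A3 a"
    by blast
  then show ?case
  proof cases
    case 1
    then have "\<not> in_A3 a" using not_in_A2_and_A3 by blast
    then have "dens (cc_B (add_mset a A)) = 1 / real (spec 2 a) + dens (cc_B A)"
      and "dens (cc_C (add_mset a A)) = dens (cc_C A)"
      using 1 by (simp_all add: cc_B_def cc_C_def)
    then show ?thesis
      using IH spec_2_in_A2(2)[OF 1] pdens_add_mset[of a A] by linarith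
  next
    case 2
    then have "\<not> in_A2 a" using not_in_A2_and_A3 by blast
    then have "dens (cc_C (add_mset a A)) = 1 / real (spec 3 a) + dens (cc_C A)"
      and "dens (cc_B (add_mset a A)) = dens (cc_B A)"
      using 2 by (simp_all add: cc_B_def cc_C_def)
    then show ?thesis
      using IH spec_3_in_A3(2)[OF 2] pdens_add_mset[of a A] by linarith
  next
    case 3
    then have "dens (cc_B (add_mset a A)) = dens (cc_B A)"
      and "dens (cc_C (add_mset a A)) = dens (cc_C A)"
      by (simp_all add: cc_B_def cc_C_def)
    moreover have "0 < 1 / a" using \<open>0 < a\<close> by simp
    ultimately show ?thesis
      using IH pdens_add_mset[of a A] by linarith
  qed
qed

lemma cc_normalize_cases:
  obtains "cc_normalize B C P Q = (B, C)"
      "dens P + dens Q = 0 \<or> 2 / 3 < 4 / 3 * dens P + dens Q"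
  | "cc_normalize B C P Q = (B - P, C + image_mset (\<lambda>p. spec 3 (real p)) P)"
      "dens P + dens Q \<noteq> 0 \<and> 4 / 3 * dens P + dens Q \<le> 1 / 3 \<or>
       1 / 3 < 4 / 3 * dens P + dens Q \<and> 4 / 3 * dens P + dens Q \<le> 2 / 3 \<and>
       1 / 2 < dens P + 3 / 2 * dens Q"
  | "cc_normalize B C P Q = (B + image_mset (\<lambda>p. spec 2 (real p)) Q, C - Q)"
      "1 / 3 < 4 / 3 * dens P + dens Q" "dens P + 3 / 2 * dens Q \<le> 1 / 2"
proof -
  let ?x = "dens P" and ?y = "dens Q"
  show thesis
  proof (cases "?x + ?y = 0 \<or> 2 / 3 < 4 / 3 * ?x + ?y")
    case True
    then have "cc_normalize B C P Q = (B, C)"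
      unfolding cc_normalize_def by auto
    then show thesis using True that(1) by blast
  next
    case keep: False
    show thesis
    proof (cases "1 / 3 < 4 / 3 * ?x + ?y \<and> ?x + 3 / 2 * ?y \<le> 1 / 2")
      case True
      then have "cc_normalize B C P Q = (B + image_mset (\<lambda>p. spec 2 (real p)) Q, C - Q)"
        using keep unfolding cc_normalize_def by auto
      then show thesis using True that(3) by blast
    next
      case False
      then have "cc_normalize B C P Q = (B - P, C + image_mset (\<lambda>p. spec 3 (real p)) P)"
        using keep unfolding cc_normalize_def by auto
      moreover have "?x + ?y \<noteq> 0 \<and> 4 / 3 * ?x + ?y \<le> 1 / 3 \<or>
        1 / 3 < 4 / 3 * ?x + ?y \<and> 4 / 3 * ?x + ?y \<le> 2 / 3 \<and> 1 / 2 < ?x + 3 / 2 * ?y"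
        using keep False by linarith
      ultimately show thesis using that(2) by blast
    qed
  qed
qed

text \<open>Here r, s are the integer parts and x = rho(P), y = rho(Q) the fractional parts of
  2 rho(B) and 3 rho(C); the last assumption is the density bound on A after specialization.\<close>

context
  fixes r s :: int and x y :: real
  assumes nonneg: "0 \<le> r" "0 \<le> s" "0 \<le> x" "0 \<le> y"
    and fractional: "x < 1 / 2" "y < 1 / 3"
    and bound: "4 * r + 3 * s + 8 * x + 9 * y \<le> 7"
begin

lemma cc_keep_bound:
  assumes "x + y = 0 \<or> 2 / 3 < 4 / 3 * x + y"
  shows "r / 2 + s / 2 + x + 3 / 2 * y \<le> 1"
  using assms
proof
  assume "x + y = 0"
  then have "4 * r + 3 * s \<le> 7" using nonneg bound by linarith
  then have "r + s \<le> 2" using nonneg by presburger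
  then have "real_of_int r + real_of_int s \<le> 2" by (simp flip: of_int_add)
  then show ?thesis using \<open>x + y = 0\<close> nonneg by linarith
next
  assume "2 / 3 < 4 / 3 * x + y"
  then have "4 * r + 3 * s < 3" using nonneg bound by linarith
  then have "r = 0" "s = 0" using nonneg by presburger+
  then show ?thesis using fractional by simp
qed

lemma cc_move_Q_bound:
  assumes "1 / 3 < 4 / 3 * x + y" and "x + 3 / 2 * y \<le> 1 / 2"
  shows "r / 2 + s / 2 + x + 3 / 2 * y \<le> 1"
proof -
  have "4 * r + 3 * s < 5" using assms nonneg bound by linarith
  then have "r + s \<le> 1" using nonneg by presburger
  then have "real_of_int r + real_of_int s \<le> 1" by (simp flip: of_int_add)
  then show ?thesis using assms by linarith
qed

lemma cc_move_P_bound: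
  assumes "x + y \<noteq> 0 \<and> 4 / 3 * x + y \<le> 1 / 3 \<or>
    1 / 3 < 4 / 3 * x + y \<and> 4 / 3 * x + y \<le> 2 / 3 \<and> 1 / 2 < x + 3 / 2 * y"
  shows "r / 2 + s / 2 + 2 * x + 3 / 2 * y \<le> 1 \<or> r = 0 \<and> s / 3 + y + 4 / 3 * x \<le> 1"
  using assms
proof
  assume a: "x + y \<noteq> 0 \<and> 4 / 3 * x + y \<le> 1 / 3"
  then have "4 * r + 3 * s < 7" using nonneg bound by linarith
  then have "r + s \<le> 1 \<or> r = 0 \<and> s = 2" using nonneg by presburger
  then show ?thesis
  proof
    assume "r + s \<le> 1"
    then have "real_of_int r + real_of_int s \<le> 1" by (simp flip: of_int_add)
    then show ?thesis using a by linarith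
  next
    assume "r = 0 \<and> s = 2"
    then show ?thesis using a by simp
  qed
next
  assume c: "1 / 3 < 4 / 3 * x + y \<and> 4 / 3 * x + y \<le> 2 / 3 \<and> 1 / 2 < x + 3 / 2 * y"
  then have "4 * r + 3 * s < 4" using nonneg bound by linarith
  then have "r = 0" "s \<le> 1" using nonneg by presburger+
  then show ?thesis using c by linarith
qed

end

lemma cc_normalize_schedulable:
  assumes B: "set_mset B \<subseteq> range (\<lambda>j. 2 * 2 ^ j)"
    and C: "set_mset C \<subseteq> range (\<lambda>j. 3 * 2 ^ j)"
    and "P \<subseteq># B" and "Q \<subseteq># C"
    and BP: "dens (B - P) = real_of_int \<lfloor>2 * dens B\<rfloor> / 2"
    and CQ: "dens (C - Q) = real_of_int \<lfloor>3 * dens C\<rfloor> / 3"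
    and bound: "2 / 3 * dens B + 3 / 4 * dens C \<le> 7 / 12"
  shows "schedulable (fst (cc_normalize B C P Q) + snd (cc_normalize B C P Q))"
proof -
  define r s where "r = \<lfloor>2 * dens B\<rfloor>" and "s = \<lfloor>3 * dens C\<rfloor>"
  have dB: "dens B = r / 2 + dens P" and dC: "dens C = s / 3 + dens Q"
    using BP CQ dens_diff[OF \<open>P \<subseteq># B\<close>] dens_diff[OF \<open>Q \<subseteq># C\<close>]
    by (simp_all add: r_def s_def)
  have nonneg: "0 \<le> r" "0 \<le> s" "0 \<le> dens P" "0 \<le> dens Q"
    unfolding r_def s_def using dens_nonneg by simp_all
  have fractional: "dens P < 1 / 2" "dens Q < 1 / 3"
    using dB dC unfolding r_def s_def by linarith+
  have "4 * r + 3 * s + 8 * dens P + 9 * dens Q \<le> 7"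
    using bound dB dC by linarith
  note arith = nonneg fractional this
  show ?thesis
  proof (cases rule: cc_normalize_cases[of B C P Q])
    case 1
    have "dens B + 3 / 2 * dens C \<le> 1"
      using cc_keep_bound[OF arith 1(2)] dB dC by linarith
    then show ?thesis
      using schedulable_pow2_multiples_2_3[OF B C] 1(1) by simp
  next
    case 2
    from cc_move_P_bound[OF arith 2(2)]
    have "dens B + 3 / 2 * dens C + dens P \<le> 1 \<or>
      dens (B - P) = 0 \<and> dens C + 4 / 3 * dens P \<le> 1"
    proof
      assume "r / 2 + s / 2 + 2 * dens P + 3 / 2 * dens Q \<le> 1"
      then show ?thesis using dB dC by linarith
    next
      assume "r = 0 \<and> s / 3 + dens Q + 4 / 3 * dens P \<le> 1"
      then show ?thesis using dC BP unfolding r_def by simp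
    qed
    then show ?thesis
      using schedulable_move_2_to_3[OF B C \<open>P \<subseteq># B\<close> fractional(1)] 2(1) by simp
  next
    case 3
    have "dens B + 3 / 2 * dens C \<le> 1"
      using cc_move_Q_bound[OF arith 3(2,3)] dB dC by linarith
    then show ?thesis
      using schedulable_move_3_to_2[OF B C \<open>Q \<subseteq># C\<close>] 3(1) by simp
  qed
qed

theorem theorem1:
  fixes A :: "real multiset"
  assumes "\<forall>p \<in># A. p \<ge> 2"
    and "pdens A \<le> 7/12"
  shows "(\<exists>P Q. cc_choice A P Q) \<and>
         (\<forall>P Q. cc_choice A P Q \<longrightarrow>
            schedulable (fst (cc_output A P Q) + snd (cc_output A P Q)))"
proof (intro conjI allI impI)
  show "\<exists>P Q. cc_choice A P Q"
    by (rule cc_choice_exists)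
  fix P Q
  assume "cc_choice A P Q"
  moreover have "2 / 3 * dens (cc_B A) + 3 / 4 * dens (cc_C A) \<le> 7 / 12"
    using cc_dens_le_pdens[of A] assms by fastforce
  ultimately show "schedulable (fst (cc_output A P Q) + snd (cc_output A P Q))"
    unfolding cc_output_def cc_choice_def
    using cc_normalize_schedulable[OF cc_B_pow2_multiples cc_C_pow2_multiples] by blast
qed

end
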